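(* Under the hypotheses and notation below, $$L(z;t):=\sum_{k>0}L_k(t)z^k=\frac{z}{(1-z)\sqrt{D(t)}}\sum_{k\ge0}S_{k,0}(t)^2z^k.$$
   Context: $\mathcal H=\{(k,0):k\le0\}$; $A\subset\mathbb{Z}^2$ finite, symmetric ($(i,j)\in A\Rightarrow(i,-j)\in A$), with small height variations ($|j|\le1$), $A_1\ne0$, and reversal-symmetric ($(i,j)\in A\Rightarrow(-i,-j)\in A$). For $k>0$, a loop at $(k,0)$ is a walk $(w_0,\dots,w_n)$, $n\ge0$, with steps in $A$, $w_0=w_n=(k,0)$ and $w_m\notin\mathcal H$ for all $m$; $L_k(t)$ is the length generating function of loops at $(k,0)$ (including the empty loop). $S_{k,0}(t)$ is the length generating function of walks with steps in $A$ from $(0,0)$ to $(k,0)$ with $w_m\notin\mathcal H$ for $1\le m\le n$. With $A_0(x)=\sum_{(i,0)\in A}x^i$, $A_1(x)=\sum_{(i,1)\in A}x^i$, $\delta(x)=(1-tA_0(x))^2-4t^2A_1(x)^2$, $D(t)$ is the constant factor of the canonical factorization $\delta=D\Delta(x)\bar\Delta(1/x)$ (unique triple of power series in $t$: $D$ real coefficients, $\Delta$ coefficients in $\mathbb{R}[x]$, $\bar\Delta$ in $\mathbb{R}[1/x]$, $D(0)=\Delta(0;t)=\bar\Delta(0;t)=\Delta(x;0)=\bar\Delta(1/x;0)=1$); $\sqrt D$ has constant term $1$. *)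

theory Defs
  imports "HOL-Computational_Algebra.Computational_Algebra"
begin

definition inH :: "int \<times> int \<Rightarrow> bool" where
  "inH p \<longleftrightarrow> snd p = 0 \<and> fst p \<le> 0"

definition is_walk :: "(int \<times> int) set \<Rightarrow> (int \<times> int) list \<Rightarrow> bool" where
  "is_walk A ws \<longleftrightarrow> ws \<noteq> [] \<and>
     (\<forall>m. Suc m < length ws \<longrightarrow>
        (fst (ws ! Suc m) - fst (ws ! m), snd (ws ! Suc m) - snd (ws ! m)) \<in> A)"

definition loops :: "(int \<times> int) set \<Rightarrow> int \<Rightarrow> nat \<Rightarrow> (int \<times> int) list set" where
  "loops A k n = {ws. is_walk A ws \<and> length ws = Suc n \<and> ws ! 0 = (k, 0) \<and>
      ws ! n = (k, 0) \<and> (\<forall>m\<le>n. \<not> inH (ws ! m))}"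

definition swalks :: "(int \<times> int) set \<Rightarrow> int \<Rightarrow> nat \<Rightarrow> (int \<times> int) list set" where
  "swalks A k n = {ws. is_walk A ws \<and> length ws = Suc n \<and> ws ! 0 = (0, 0) \<and>
      ws ! n = (k, 0) \<and> (\<forall>m. 1 \<le> m \<and> m \<le> n \<longrightarrow> \<not> inH (ws ! m))}"

definition Lgf :: "(int \<times> int) set \<Rightarrow> int \<Rightarrow> real fps" where
  "Lgf A k = Abs_fps (\<lambda>n. real (card (loops A k n)))"

definition Sgf :: "(int \<times> int) set \<Rightarrow> int \<Rightarrow> real fps" where
  "Sgf A k = Abs_fps (\<lambda>n. real (card (swalks A k n)))"

text \<open>Laurent polynomials in x are represented as (finitely supported) formal
  Laurent series real fls. A_0(x) and A_1(x):\<close>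
definition Apoly :: "(int \<times> int) set \<Rightarrow> int \<Rightarrow> real fls" where
  "Apoly A j = (\<Sum>p\<in>{p\<in>A. snd p = j}. fls_X_intpow (fst p))"

definition delta :: "(int \<times> int) set \<Rightarrow> real fls fps" where
  "delta A = (1 - fps_X * fps_const (Apoly A 0))\<^sup>2
             - 4 * fps_X\<^sup>2 * fps_const ((Apoly A 1)\<^sup>2)"

definition poly_x :: "real poly \<Rightarrow> real fls" where
  "poly_x p = (\<Sum>i\<le>degree p. fls_const (coeff p i) * fls_X_intpow (int i))"

definition poly_xinv :: "real poly \<Rightarrow> real fls" where
  "poly_xinv p = (\<Sum>i\<le>degree p. fls_const (coeff p i) * fls_X_intpow (- int i))"

text \<open>Canonical factorization delta = D * Delta(x) * Delta-bar(1/x):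
  D a real power series in t, Delta (resp. Delta-bar) a power series in t whose
  coefficients are polynomials in x (resp. in 1/x), normalized by
  D(0) = Delta(0;t) = Delta-bar(0;t) = Delta(x;0) = Delta-bar(1/x;0) = 1.\<close>
definition canonical_factorization ::
    "(int \<times> int) set \<Rightarrow> real fps \<Rightarrow> real poly fps \<Rightarrow> real poly fps \<Rightarrow> bool" where
  "canonical_factorization A D Dl Dlb \<longleftrightarrow>
     fps_nth D 0 = 1 \<and>
     (\<forall>n. poly (fps_nth Dl n) 0 = (if n = 0 then 1 else 0)) \<and>
     (\<forall>n. poly (fps_nth Dlb n) 0 = (if n = 0 then 1 else 0)) \<and>
     fps_nth Dl 0 = 1 \<and> fps_nth Dlb 0 = 1 \<and>
     delta A = Abs_fps (\<lambda>n. fls_const (fps_nth D n))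
               * Abs_fps (\<lambda>n. poly_x (fps_nth Dl n))
               * Abs_fps (\<lambda>n. poly_xinv (fps_nth Dlb n))"

definition Dconst :: "(int \<times> int) set \<Rightarrow> real fps" where
  "Dconst A = (THE D. \<exists>Dl Dlb. canonical_factorization A D Dl Dlb)"

definition fps_sqrt1 :: "real fps \<Rightarrow> real fps" where
  "fps_sqrt1 F = (THE s. fps_nth s 0 = 1 \<and> s\<^sup>2 = F)"

end

(*
  Let P_k count walks from the origin to (k,0) that never visit a point (x,0) with x < 0, and
  E = P_0. Cutting a loop at (k+1,0) at its first visit to (k,0) gives L_{k+1} = L_k + S_{k,0} P_k;
  reversing a walk counted by P_k and cutting it at its first visit to the origin gives
  P_k = S_{k,0} E. Since L_1 = E, this yields L_k = E (S_{0,0}^2 + ... + S_{k-1,0}^2), which is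
  the claim with E in place of 1/sqrt D.

  To identify E, let W(x;t) count unconstrained walks from the origin to the horizontal axis.
  Cutting such a walk at its first visit to the leftmost point of the axis that it reaches gives
  W = S(1/x) P(x) = E S(x) S(1/x) with S(x) = sum_k S_{k,0} x^k. The generating functions of walks
  ending at height y satisfy a linear recurrence in y which the kernel method solves, giving
  W = delta^(-1/2). Hence delta = E^(-2) S(x)^(-2) S(1/x)^(-2) is a canonical factorization, and
  its uniqueness gives D = E^(-2).
*)

theory Submission
  imports Defs "HOL-Library.Product_Plus"
begin

unbundle Formal_Laurent_Series.fps_syntax

section \<open>Walks with forbidden points\<close>

fun walk_count :: "(int \<times> int) set \<Rightarrow> (int \<times> int \<Rightarrow> bool) \<Rightarrow> nat \<Rightarrow> int \<times> int \<Rightarrow> int \<times> int \<Rightarrow> nat"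
where
  "walk_count A F 0 p q = (if p = q then 1 else 0)"
| "walk_count A F (Suc n) p q = (\<Sum>s\<in>A. if F (p + s) then 0 else walk_count A F n (p + s) q)"

declare walk_count.simps(2)[simp del]
lemmas walk_count_Suc = walk_count.simps(2)

text \<open>Walks whose last point is exempt from the constraint F.\<close>
definition walk_count_open ::
    "(int \<times> int) set \<Rightarrow> (int \<times> int \<Rightarrow> bool) \<Rightarrow> nat \<Rightarrow> int \<times> int \<Rightarrow> int \<times> int \<Rightarrow> nat"
where
  "walk_count_open A F n p q =
     (case n of 0 \<Rightarrow> if p = q then 1 else 0 | Suc m \<Rightarrow> \<Sum>s\<in>A. walk_count A F m p (q - s))"

lemma walk_count_open_0 [simp]: "walk_count_open A F 0 p q = (if p = q then 1 else 0)"
  by (simp add: walk_count_open_def)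

lemma walk_count_open_Suc: "walk_count_open A F (Suc m) p q = (\<Sum>s\<in>A. walk_count A F m p (q - s))"
  by (simp add: walk_count_open_def)

lemma if_zero_sum_distrib: "(if c then 0 else (\<Sum>x\<in>S. f x)) = (\<Sum>x\<in>S. if c then 0 else f x)"
  by simp

lemma walk_count_Suc_last:
  "walk_count A F (Suc n) p q = (if F q then 0 else (\<Sum>s\<in>A. walk_count A F n p (q - s)))"
proof (induction n arbitrary: p)
  case 0
  show ?case
  proof (cases "F q")
    case True
    then show ?thesis by (auto intro!: sum.neutral simp: walk_count_Suc)
  next
    case False
    then show ?thesis by (auto intro!: sum.cong simp: eq_diff_eq walk_count_Suc)
  qed
next
  case (Suc n)
  have "walk_count A F (Suc (Suc n)) p q
      = (\<Sum>s\<in>A. if F (p + s) then 0 else walk_count A F (Suc n) (p + s) q)"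
    by (rule walk_count_Suc)
  also have "\<dots> = (\<Sum>s\<in>A. if F (p + s) then 0 else
           (if F q then 0 else (\<Sum>s'\<in>A. walk_count A F n (p + s) (q - s'))))"
    by (simp only: Suc.IH)
  also have "\<dots> = (if F q then 0 else (\<Sum>s'\<in>A. walk_count A F (Suc n) p (q - s')))"
  proof (cases "F q")
    case False
    have "(\<Sum>s\<in>A. if F (p + s) then 0 else (\<Sum>s'\<in>A. walk_count A F n (p + s) (q - s')))
        = (\<Sum>s'\<in>A. \<Sum>s\<in>A. if F (p + s) then 0 else walk_count A F n (p + s) (q - s'))"
      by (simp only: if_zero_sum_distrib) (rule sum.swap)
    then show ?thesis using False by (simp add: walk_count_Suc cong: if_cong)
  qed (auto intro!: sum.neutral)
  finally show ?case .
qed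

lemma walk_count_Suc_eq_open:
  "walk_count A F (Suc n) p q = (if F q then 0 else walk_count_open A F (Suc n) p q)"
  by (subst walk_count_Suc_last) (simp add: walk_count_open_Suc)

lemma walk_count_eq_open: "\<not> F q \<Longrightarrow> 0 < n \<Longrightarrow> walk_count A F n p q = walk_count_open A F n p q"
  by (cases n) (simp_all add: walk_count_Suc_eq_open)

lemma walk_count_open_Suc_Suc:
  "walk_count_open A F (Suc (Suc n)) p q
     = (\<Sum>s\<in>A. if F (p + s) then 0 else walk_count_open A F (Suc n) (p + s) q)"
proof -
  have "walk_count_open A F (Suc (Suc n)) p q
      = (\<Sum>s'\<in>A. \<Sum>s\<in>A. if F (p + s) then 0 else walk_count A F n (p + s) (q - s'))"
    by (simp add: walk_count_open_Suc walk_count_Suc if_zero_sum_distrib)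
  also have "\<dots> = (\<Sum>s\<in>A. \<Sum>s'\<in>A. if F (p + s) then 0 else walk_count A F n (p + s) (q - s'))"
    by (rule sum.swap)
  finally show ?thesis
    by (simp only: if_zero_sum_distrib walk_count_open_Suc)
qed

lemma sum_reindex_uminus:
  fixes A :: "'a::group_add set"
  assumes "\<And>s. s \<in> A \<Longrightarrow> - s \<in> A"
  shows "(\<Sum>s\<in>A. f s) = (\<Sum>s\<in>A. f (- s))"
  by (rule sum.reindex_bij_witness[where i = uminus and j = uminus]) (auto simp: assms)

text \<open>Proved by reversing walks.\<close>
lemma walk_count_open_swap:
  assumes neg: "\<And>s. s \<in> A \<Longrightarrow> - s \<in> A"
  shows "walk_count_open A F n p q = walk_count_open A F n q p"
proof (induction n arbitrary: p q)
  case (Suc n)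
  show ?case
  proof (cases n)
    case 0
    have "walk_count_open A F (Suc n) p q = (\<Sum>s\<in>A. if p = q - s then 1 else 0)"
      by (simp add: walk_count_open_Suc 0)
    also have "\<dots> = (\<Sum>s\<in>A. if p = q - - s then 1 else 0)"
      by (rule sum_reindex_uminus[OF neg])
    also have "\<dots> = walk_count_open A F (Suc n) q p"
      by (simp add: walk_count_open_Suc 0) (intro sum.cong refl, auto simp: algebra_simps)
    finally show ?thesis .
  next
    case (Suc m)
    have "walk_count_open A F (Suc n) p q
        = (\<Sum>s\<in>A. if F (p + s) then 0 else walk_count_open A F (Suc m) (p + s) q)"
      by (simp add: Suc walk_count_open_Suc_Suc)
    also have "\<dots> = (\<Sum>s\<in>A. if F (p + s) then 0 else walk_count_open A F (Suc m) q (p + s))"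
      using Suc.IH Suc by (intro sum.cong refl) simp
    also have "\<dots> = (\<Sum>s\<in>A. if F (p - s) then 0 else walk_count_open A F (Suc m) q (p - s))"
      using sum_reindex_uminus[OF neg,
          of "\<lambda>s. if F (p + s) then 0 else walk_count_open A F (Suc m) q (p + s)"]
      by (simp cong: if_cong)
    also have "\<dots> = walk_count_open A F (Suc n) q p"
      by (simp add: Suc walk_count_open_Suc walk_count_Suc_last cong: if_cong)
    finally show ?thesis .
  qed
qed simp


lemma walk_count_translate:
  "walk_count A F n p q = walk_count A (\<lambda>r. F (r + d)) n (p - d) (q - d)"
proof (induction n arbitrary: p)
  case (Suc n)
  have "walk_count A F (Suc n) p q
      = (\<Sum>s\<in>A. if F (p + s) then 0 else walk_count A (\<lambda>r. F (r + d)) n (p + s - d) (q - d))"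
    by (simp only: walk_count_Suc Suc.IH)
  also have "\<dots> = walk_count A (\<lambda>r. F (r + d)) (Suc n) (p - d) (q - d)"
    by (simp add: walk_count_Suc algebra_simps cong: if_cong)
  finally show ?case .
qed simp

lemma walk_count_open_translate:
  "walk_count_open A F n p q = walk_count_open A (\<lambda>r. F (r + d)) n (p - d) (q - d)"
  by (cases n) (simp_all add: walk_count_open_Suc walk_count_translate[of A F _ p _ d] algebra_simps)

lemma walk_count_open_first_step_sum:
  "(\<Sum>s\<in>A. if F (p + s) then 0 else (\<Sum>m=1..n. walk_count_open A F m (p + s) v * c m))
     = (\<Sum>m=1..n. walk_count_open A F (Suc m) p v * c m)"
proof -
  have "(\<Sum>s\<in>A. if F (p + s) then 0 else (\<Sum>m=1..n. walk_count_open A F m (p + s) v * c m))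
      = (\<Sum>m=1..n. \<Sum>s\<in>A. (if F (p + s) then 0 else walk_count_open A F m (p + s) v) * c m)"
    by (subst sum.swap) (auto intro!: sum.cong)
  also have "\<dots> = (\<Sum>m=1..n. walk_count_open A F (Suc m) p v * c m)"
  proof (intro sum.cong refl)
    fix m assume "m \<in> {1..n}"
    then obtain m' where "m = Suc m'" by (cases m) auto
    then show "(\<Sum>s\<in>A. (if F (p + s) then 0 else walk_count_open A F m (p + s) v) * c m)
        = walk_count_open A F (Suc m) p v * c m"
      by (simp add: walk_count_open_Suc_Suc sum_distrib_right cong: if_cong)
  qed
  finally show ?thesis .
qed

text \<open>Decomposition according to the first time m \<ge> 1 at which the walk visits v.\<close>
lemma walk_count_first_visit:
  assumes Fv: "\<not> F v"
  shows "walk_count A F n p q = walk_count A (F(v := True)) n p q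
          + (\<Sum>m=1..n. walk_count_open A (F(v := True)) m p v * walk_count A F (n - m) v q)"
proof (induction n arbitrary: p)
  case (Suc n)
  define G where "G = F(v := True)"
  have split_step: "(if F (p + s) then 0 else walk_count A F n (p + s) q)
      = (if p + s = v then walk_count A F n v q else 0)
        + (if G (p + s) then 0 else walk_count A G n (p + s) q)
        + (if G (p + s) then 0 else
             (\<Sum>m=1..n. walk_count_open A G m (p + s) v * walk_count A F (n - m) v q))" for s
  proof (cases "p + s = v")
    case False
    then have "G (p + s) = F (p + s)" by (simp add: G_def)
    with False show ?thesis using Suc.IH[of "p + s"] by (simp add: G_def del: fun_upd_apply)
  qed (use Fv in \<open>simp add: G_def\<close>)
  have first_step: "(\<Sum>s\<in>A. if p + s = v then walk_count A F n v q else 0)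
      = walk_count_open A G 1 p v * walk_count A F (Suc n - 1) v q"
    by (simp add: walk_count_open_Suc sum_distrib_right, intro sum.cong refl, auto simp: eq_diff_eq)
  have later_steps:
    "(\<Sum>s\<in>A. if G (p + s) then 0 else
         (\<Sum>m=1..n. walk_count_open A G m (p + s) v * walk_count A F (n - m) v q))
      = (\<Sum>m=2..Suc n. walk_count_open A G m p v * walk_count A F (Suc n - m) v q)"
    by (subst walk_count_open_first_step_sum)
      (simp only: numeral_2_eq_2 One_nat_def sum.shift_bounds_cl_Suc_ivl diff_Suc_Suc)
  have "walk_count A F (Suc n) p q = walk_count A G (Suc n) p q
      + (walk_count_open A G 1 p v * walk_count A F (Suc n - 1) v q
         + (\<Sum>m=2..Suc n. walk_count_open A G m p v * walk_count A F (Suc n - m) v q))"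
    by (simp only: walk_count_Suc[of A F] split_step sum.distrib first_step later_steps)
      (simp add: walk_count_Suc)
  also have "walk_count_open A G 1 p v * walk_count A F (Suc n - 1) v q
      + (\<Sum>m=2..Suc n. walk_count_open A G m p v * walk_count A F (Suc n - m) v q)
      = (\<Sum>m=1..Suc n. walk_count_open A G m p v * walk_count A F (Suc n - m) v q)"
    by (subst sum.atLeast_Suc_atMost[of 1]) (simp_all add: numeral_2_eq_2)
  finally show ?case by (simp only: G_def)
qed simp

lemma is_walk_single [simp]: "is_walk A [a]"
  by (simp add: is_walk_def)

lemma is_walk_Cons:
  assumes "ws \<noteq> []"
  shows "is_walk A (a # ws) \<longleftrightarrow> ws ! 0 - a \<in> A \<and> is_walk A ws"
proof
  assume h: "is_walk A (a # ws)"
  have "ws ! 0 - a \<in> A"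
    using h assms unfolding is_walk_def by (auto elim!: allE[of _ 0] simp: minus_prod_def)
  moreover have "is_walk A ws"
    using h assms unfolding is_walk_def by (metis Suc_less_eq length_Cons nth_Cons_Suc)
  ultimately show "ws ! 0 - a \<in> A \<and> is_walk A ws" by blast
next
  assume h: "ws ! 0 - a \<in> A \<and> is_walk A ws"
  show "is_walk A (a # ws)"
    unfolding is_walk_def
  proof (intro conjI allI impI)
    fix m assume m: "Suc m < length (a # ws)"
    show "(fst ((a # ws) ! Suc m) - fst ((a # ws) ! m), snd ((a # ws) ! Suc m) - snd ((a # ws) ! m)) \<in> A"
      using h m unfolding is_walk_def by (cases m) (simp_all add: prod_eq_iff minus_prod_def)
  qed simp
qed

definition walk_set ::
    "(int \<times> int) set \<Rightarrow> (int \<times> int \<Rightarrow> bool) \<Rightarrow> nat \<Rightarrow> int \<times> int \<Rightarrow> int \<times> int \<Rightarrow> (int \<times> int) list set"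
where
  "walk_set A F n p q = {ws. is_walk A ws \<and> length ws = Suc n \<and> ws ! 0 = p \<and> ws ! n = q \<and>
      (\<forall>m. 1 \<le> m \<and> m \<le> n \<longrightarrow> \<not> F (ws ! m))}"

lemma walk_set_0: "walk_set A F 0 p q = (if p = q then {[p]} else {})"
  unfolding walk_set_def by (auto simp: length_Suc_conv)

lemma walk_set_Suc:
  "walk_set A F (Suc n) p q = (\<Union>s\<in>{s\<in>A. \<not> F (p + s)}. (Cons p) ` walk_set A F n (p + s) q)"
proof (intro equalityI subsetI)
  fix ws assume "ws \<in> walk_set A F (Suc n) p q"
  hence h: "is_walk A ws" "length ws = Suc (Suc n)" "ws ! 0 = p" "ws ! Suc n = q"
      "\<And>m. 1 \<le> m \<Longrightarrow> m \<le> Suc n \<Longrightarrow> \<not> F (ws ! m)"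
    unfolding walk_set_def by auto
  obtain ws' where ws: "ws = p # ws'" using h(2,3) by (cases ws) auto
  have ne: "ws' \<noteq> []" using h(2) ws by auto
  define s where "s = ws' ! 0 - p"
  have "s \<in> A" "is_walk A ws'" using h(1) ws is_walk_Cons[OF ne] s_def by auto
  moreover have "\<not> F (p + s)" using h(5)[of 1] ws s_def by simp
  moreover have "ws' \<in> walk_set A F n (p + s) q"
    using h ws s_def \<open>is_walk A ws'\<close> h(5)[of "Suc _"] unfolding walk_set_def by auto
  ultimately show "ws \<in> (\<Union>s\<in>{s\<in>A. \<not> F (p + s)}. (Cons p) ` walk_set A F n (p + s) q)"
    using ws by blast
next
  fix ws assume "ws \<in> (\<Union>s\<in>{s\<in>A. \<not> F (p + s)}. (Cons p) ` walk_set A F n (p + s) q)"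
  then obtain s ws' where s: "s \<in> A" "\<not> F (p + s)" and ws: "ws = p # ws'" and
      w': "ws' \<in> walk_set A F n (p + s) q" by blast
  have h: "is_walk A ws'" "length ws' = Suc n" "ws' ! 0 = p + s" "ws' ! n = q"
      "\<And>m. 1 \<le> m \<Longrightarrow> m \<le> n \<Longrightarrow> \<not> F (ws' ! m)"
    using w' unfolding walk_set_def by auto
  have "ws' \<noteq> []" using h(2) by auto
  then have "is_walk A ws" using ws is_walk_Cons h s by simp
  moreover have "\<not> F (ws ! m)" if "1 \<le> m" "m \<le> Suc n" for m
    using that ws h(3,5) s(2) by (cases m; cases "m - 1") auto
  ultimately show "ws \<in> walk_set A F (Suc n) p q"
    unfolding walk_set_def using ws h by auto
qed

lemma card_walk_set:
  assumes "finite A"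
  shows "finite (walk_set A F n p q) \<and> card (walk_set A F n p q) = walk_count A F n p q"
proof (induction n arbitrary: p)
  case 0
  then show ?case by (simp add: walk_set_0)
next
  case (Suc n)
  let ?S = "{s\<in>A. \<not> F (p + s)}"
  have fin: "finite ?S" using assms by simp
  have disj: "\<forall>s\<in>?S. \<forall>s'\<in>?S. s \<noteq> s' \<longrightarrow>
      (Cons p) ` walk_set A F n (p + s) q \<inter> (Cons p) ` walk_set A F n (p + s') q = {}"
    by (auto simp: walk_set_def)
  have "card (walk_set A F (Suc n) p q) = (\<Sum>s\<in>?S. card ((Cons p) ` walk_set A F n (p + s) q))"
    unfolding walk_set_Suc using fin Suc disj by (intro card_UN_disjoint) auto
  also have "\<dots> = (\<Sum>s\<in>?S. walk_count A F n (p + s) q)"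
    using Suc by (intro sum.cong refl) (simp add: card_image)
  also have "\<dots> = walk_count A F (Suc n) p q"
    using assms by (simp add: walk_count_Suc sum.inter_filter) (intro sum.cong refl, simp)
  finally show ?case using fin Suc by (simp add: walk_set_Suc)
qed

lemma walk_count_nonzero_dist:
  assumes b: "\<And>s. s \<in> A \<Longrightarrow> \<bar>fst s\<bar> \<le> b"
  shows "walk_count A F n p q \<noteq> 0 \<Longrightarrow> \<bar>fst q - fst p\<bar> \<le> int n * b"
proof (induction n arbitrary: p)
  case 0
  then show ?case by (simp split: if_splits)
next
  case (Suc n)
  from Suc.prems have "(\<Sum>s\<in>A. if F (p + s) then 0 else walk_count A F n (p + s) q) \<noteq> 0"
    by (simp add: walk_count_Suc)
  then obtain s where "s \<in> A" "(if F (p + s) then 0 else walk_count A F n (p + s) q) \<noteq> 0"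
    by (rule sum.not_neutral_contains_not_neutral)
  then have "s \<in> A" "walk_count A F n (p + s) q \<noteq> 0"
    by (auto split: if_splits)
  with Suc.IH[of "p + s"] b[of s] show ?case by (simp add: algebra_simps abs_le_iff)
qed

lemma walk_count_local:
  assumes b: "\<And>s. s \<in> A \<Longrightarrow> \<bar>fst s\<bar> \<le> b" and b0: "0 \<le> b"
    and agree: "\<And>r. \<bar>fst r - fst p\<bar> \<le> int n * b \<Longrightarrow> F r = F' r"
  shows "walk_count A F n p q = walk_count A F' n p q"
  using agree
proof (induction n arbitrary: p)
  case (Suc n)
  have "(if F (p + s) then 0 else walk_count A F n (p + s) q)
      = (if F' (p + s) then 0 else walk_count A F' n (p + s) q)" if s: "s \<in> A" for s
  proof -
    have bs: "\<bar>fst s\<bar> \<le> b" using b s by blast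
    have "\<bar>fst (p + s) - fst p\<bar> \<le> int (Suc n) * b"
      using bs b0 by (simp add: algebra_simps add_increasing2)
    then have "F (p + s) = F' (p + s)" by (rule Suc.prems)
    moreover have "walk_count A F n (p + s) q = walk_count A F' n (p + s) q"
      using Suc.prems bs by (intro Suc.IH) (simp add: algebra_simps abs_le_iff)
    ultimately show ?thesis by simp
  qed
  then show ?case by (simp add: walk_count_Suc)
qed simp


section \<open>Walks avoiding a half-line\<close>

definition half_line :: "int \<Rightarrow> int \<times> int \<Rightarrow> bool" where
  "half_line j r \<longleftrightarrow> snd r = 0 \<and> fst r < j"

lemma inH_eq_half_line: "inH = half_line 1"
  by (auto simp: fun_eq_iff inH_def half_line_def)

lemma half_line_upd: "(half_line j)((j, 0) := True) = half_line (j + 1)"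
  by (auto simp: fun_eq_iff half_line_def)

lemma half_line_translate: "(\<lambda>r. half_line j (r + (d, 0))) = half_line (j - d)"
  by (auto simp: fun_eq_iff half_line_def)

definition max_step :: "(int \<times> int) set \<Rightarrow> int" where
  "max_step A = Max (insert 0 ((\<lambda>s. \<bar>fst s\<bar>) ` A))"

lemma abs_fst_le_max_step: "finite A \<Longrightarrow> s \<in> A \<Longrightarrow> \<bar>fst s\<bar> \<le> max_step A"
  unfolding max_step_def by (rule Max_ge) auto

lemma max_step_nonneg: "finite A \<Longrightarrow> 0 \<le> max_step A"
  unfolding max_step_def by (rule Max_ge) auto

definition Scount :: "(int \<times> int) set \<Rightarrow> int \<Rightarrow> nat \<Rightarrow> nat" where
  "Scount A i n = walk_count A (half_line 1) n 0 (i, 0)"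

definition Pcount :: "(int \<times> int) set \<Rightarrow> int \<Rightarrow> nat \<Rightarrow> nat" where
  "Pcount A k n = walk_count A (half_line 0) n 0 (k, 0)"

definition Lcount :: "(int \<times> int) set \<Rightarrow> int \<Rightarrow> nat \<Rightarrow> nat" where
  "Lcount A k n = walk_count A (half_line 1) n (k, 0) (k, 0)"

definition Wcount :: "(int \<times> int) set \<Rightarrow> int \<Rightarrow> int \<Rightarrow> nat \<Rightarrow> nat" where
  "Wcount A k y n = walk_count A (\<lambda>_. False) n 0 (k, y)"

lemma Scount_origin: "Scount A 0 n = (if n = 0 then 1 else 0)"
  by (cases n) (simp_all add: Scount_def walk_count_Suc_eq_open half_line_def zero_prod_def)

lemma Scount_length_0: "i \<noteq> 0 \<Longrightarrow> Scount A i 0 = 0"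
  by (simp add: Scount_def zero_prod_def)

lemma Pcount_neg: "k < 0 \<Longrightarrow> Pcount A k n = 0"
  by (cases n) (simp_all add: Pcount_def walk_count_Suc_eq_open half_line_def zero_prod_def)

lemma Scount_nonzero_bound: "finite A \<Longrightarrow> Scount A i n \<noteq> 0 \<Longrightarrow> \<bar>i\<bar> \<le> int n * max_step A"
  unfolding Scount_def using walk_count_nonzero_dist[of A "max_step A" "half_line 1" n 0 "(i, 0)"]
  by (auto simp: abs_fst_le_max_step)

lemma Pcount_nonzero_bound: "finite A \<Longrightarrow> Pcount A i n \<noteq> 0 \<Longrightarrow> \<bar>i\<bar> \<le> int n * max_step A"
  unfolding Pcount_def using walk_count_nonzero_dist[of A "max_step A" "half_line 0" n 0 "(i, 0)"]
  by (auto simp: abs_fst_le_max_step)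

lemma Wcount_nonzero_bound: "finite A \<Longrightarrow> Wcount A k y n \<noteq> 0 \<Longrightarrow> \<bar>k\<bar> \<le> int n * max_step A"
  unfolding Wcount_def using walk_count_nonzero_dist[of A "max_step A" "\<lambda>_. False" n 0 "(k, y)"]
  by (auto simp: abs_fst_le_max_step)

lemma Wcount_0: "Wcount A k y 0 = (if k = 0 \<and> y = 0 then 1 else 0)"
  by (auto simp: Wcount_def zero_prod_def)

lemma Wcount_Suc: "Wcount A k y (Suc n) = (\<Sum>s\<in>A. Wcount A (k - fst s) (y - snd s) n)"
  unfolding Wcount_def by (subst walk_count_Suc_last) (simp add: minus_prod_def)

lemma sum_Scount_origin: "(\<Sum>m=0..n. Scount A 0 m * f m) = f 0"
proof -
  have "(\<Sum>m=0..n. Scount A 0 m * f m) = (\<Sum>m=0..n. if m = 0 then f m else 0)"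
    by (intro sum.cong) (auto simp: Scount_origin)
  then show ?thesis by simp
qed

lemma sum_atLeast1_eq_atLeast0: "f 0 = 0 \<Longrightarrow> (\<Sum>m=1..n. f m) = (\<Sum>m=0..n. f (m::nat))"
  by (simp add: sum.atLeast_Suc_atMost[of 0 n] atLeastSucAtMost_greaterThanAtMost flip: One_nat_def)

locale finite_steps =
  fixes A :: "(int \<times> int) set"
  assumes finite_steps: "finite A"

locale reversible_steps = finite_steps +
  assumes uminus_step: "\<And>s. s \<in> A \<Longrightarrow> - s \<in> A"
begin

lemma walk_count_open_eq_Scount:
  assumes "0 < i"
  shows "walk_count_open A (half_line 1) m (i, 0) 0 = Scount A i m"
proof (cases m)
  case (Suc m')
  have "walk_count_open A (half_line 1) m (i, 0) 0 = walk_count_open A (half_line 1) m 0 (i, 0)"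
    by (rule walk_count_open_swap[OF uminus_step])
  also have "\<dots> = Scount A i m"
    unfolding Scount_def using assms Suc by (subst walk_count_eq_open) (auto simp: half_line_def)
  finally show ?thesis .
qed (use assms in \<open>simp add: Scount_def zero_prod_def\<close>)

lemma walk_count_half_line_first_visit:
  "walk_count A (half_line j) n p q = walk_count A (half_line (j + 1)) n p q
     + (\<Sum>m=1..n. walk_count_open A (half_line (j + 1)) m p (j, 0)
                  * walk_count A (half_line j) (n - m) (j, 0) q)"
  using walk_count_first_visit[of "half_line j" "(j, 0)" A n p q] half_line_upd[of j]
  by (simp add: half_line_def)

text \<open>Reverse the walk and cut it at its first visit to the origin.\<close>
lemma Pcount_eq_convolution:
  assumes "0 \<le> k"
  shows "Pcount A k r = (\<Sum>m=0..r. Scount A k m * Pcount A 0 (r - m))"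
proof (cases "k = 0 \<or> r = 0")
  case True
  then consider "k = 0" | "r = 0" by blast
  then show ?thesis
  proof cases
    case 1
    then show ?thesis by (simp add: sum_Scount_origin)
  next
    case 2
    then show ?thesis by (simp add: Scount_def Pcount_def zero_prod_def)
  qed
next
  case False
  then have k: "0 < k" and r: "0 < r" using assms by auto
  have "Pcount A k r = walk_count_open A (half_line 0) r 0 (k, 0)"
    unfolding Pcount_def using k r by (subst walk_count_eq_open) (auto simp: half_line_def)
  also have "\<dots> = walk_count_open A (half_line 0) r (k, 0) 0"
    by (rule walk_count_open_swap[OF uminus_step])
  also have "\<dots> = walk_count A (half_line 0) r (k, 0) 0"
    using r by (subst walk_count_eq_open) (auto simp: half_line_def zero_prod_def)
  also have "\<dots> = (\<Sum>m=1..r. walk_count_open A (half_line 1) m (k, 0) 0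
                       * walk_count A (half_line 0) (r - m) 0 0)"
  proof -
    have "walk_count A (half_line 1) r (k, 0) 0 = 0"
      using r by (cases r) (simp_all add: walk_count_Suc_eq_open half_line_def)
    then show ?thesis
      using walk_count_half_line_first_visit[of 0 r "(k, 0)" 0] by (simp flip: zero_prod_def)
  qed
  also have "\<dots> = (\<Sum>m=0..r. Scount A k m * Pcount A 0 (r - m))"
    using k by (subst sum_atLeast1_eq_atLeast0)
      (simp_all add: walk_count_open_eq_Scount Scount_length_0 Pcount_def prod_eq_iff flip: zero_prod_def)
  finally show ?thesis .
qed

text \<open>Cut a loop at (k + 1, 0) at its first visit to (k, 0).\<close>
lemma Lcount_Suc:
  assumes k: "0 < k"
  shows "Lcount A (k + 1) n = Lcount A k n + (\<Sum>m=0..n. Scount A k m * Pcount A k (n - m))"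
proof -
  have "Lcount A (k + 1) n = walk_count A (half_line 0) n (k, 0) (k, 0)"
    unfolding Lcount_def by (subst walk_count_translate[where d = "(1, 0)"]) (simp add: half_line_translate)
  also have "\<dots> = Lcount A k n + (\<Sum>m=1..n. walk_count_open A (half_line 1) m (k, 0) 0
                                      * walk_count A (half_line 0) (n - m) 0 (k, 0))"
    unfolding Lcount_def using walk_count_half_line_first_visit[of 0 n "(k, 0)" "(k, 0)"]
    by (simp flip: zero_prod_def)
  also have "\<dots> = Lcount A k n + (\<Sum>m=0..n. Scount A k m * Pcount A k (n - m))"
    using k by (subst sum_atLeast1_eq_atLeast0)
      (simp_all add: walk_count_open_eq_Scount Scount_length_0 Pcount_def prod_eq_iff flip: zero_prod_def)
  finally show ?thesis .
qed

lemma Lcount_1: "Lcount A 1 n = Pcount A 0 n"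
  unfolding Lcount_def Pcount_def
  by (subst walk_count_translate[where d = "(1, 0)"]) (simp add: half_line_translate zero_prod_def)

lemma walk_count_half_line_telescope:
  "walk_count A (half_line (- int t)) n 0 q = walk_count A (half_line 0) n 0 q
     + (\<Sum>i=1..t. \<Sum>m=1..n. walk_count_open A (half_line (1 - int i)) m 0 (- int i, 0)
            * walk_count A (half_line (- int i)) (n - m) (- int i, 0) q)"
proof (induction t)
  case (Suc t)
  then show ?case
    using walk_count_half_line_first_visit[of "- int (Suc t)" n 0 q] by (simp add: algebra_simps)
qed simp

text \<open>Cut an unconstrained walk at its first visit to the leftmost point (-i, 0) of the
  horizontal axis that it reaches.\<close>
lemma Wcount_eq_sum:
  assumes M: "int n * max_step A \<le> int M"
  shows "Wcount A k 0 n = (\<Sum>i=0..M. \<Sum>m=0..n. Scount A (int i) m * Pcount A (k + int i) (n - m))"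
proof -
  have Scount_shift: "walk_count_open A (half_line (1 - int i)) m 0 (- int i, 0) = Scount A (int i) m"
    if "1 \<le> i" for i m
    using that walk_count_open_eq_Scount[of "int i" m]
    by (subst walk_count_open_translate[where d = "(- int i, 0)"]) (simp add: half_line_translate zero_prod_def)
  have Pcount_shift: "walk_count A (half_line (- int i)) r (- int i, 0) (k, 0) = Pcount A (k + int i) r"
    for i r
    unfolding Pcount_def
    by (subst walk_count_translate[where d = "(- int i, 0)"]) (simp add: half_line_translate zero_prod_def)
  have "Wcount A k 0 n = walk_count A (half_line (- int M)) n 0 (k, 0)"
    unfolding Wcount_def using M abs_fst_le_max_step[OF finite_steps] max_step_nonneg[OF finite_steps]
    by (intro walk_count_local[where b = "max_step A"]) (auto simp: half_line_def)
  also have "\<dots> = Pcount A k n + (\<Sum>i=1..M. \<Sum>m=1..n. Scount A (int i) m * Pcount A (k + int i) (n - m))"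
    by (simp add: walk_count_half_line_telescope Scount_shift Pcount_shift Pcount_def[symmetric])
  also have "(\<Sum>i=1..M. \<Sum>m=1..n. Scount A (int i) m * Pcount A (k + int i) (n - m))
      = (\<Sum>i=1..M. \<Sum>m=0..n. Scount A (int i) m * Pcount A (k + int i) (n - m))"
    by (intro sum.cong refl sum_atLeast1_eq_atLeast0) (simp add: Scount_length_0)
  also have "Pcount A k n = (\<Sum>m=0..n. Scount A (int 0) m * Pcount A (k + int 0) (n - m))"
    by (simp add: sum_Scount_origin)
  finally show ?thesis
    by (simp add: sum.atLeast_Suc_atMost[of 0 M] atLeastSucAtMost_greaterThanAtMost flip: One_nat_def)
qed

end

lemma swalks_eq_walk_set: "swalks A i n = walk_set A inH n 0 (i, 0)"
  unfolding swalks_def walk_set_def by (simp add: zero_prod_def)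

lemma loops_eq_walk_set:
  assumes "0 < k"
  shows "loops A k n = walk_set A inH n (k, 0) (k, 0)"
proof -
  have "(\<forall>m\<le>n. \<not> inH (ws ! m)) \<longleftrightarrow> (\<forall>m. 1 \<le> m \<and> m \<le> n \<longrightarrow> \<not> inH (ws ! m))"
    if "ws ! 0 = (k, 0)" for ws :: "(int \<times> int) list"
    using that assms by (metis inH_def fst_conv le_zero_eq not_less_eq_eq not_le One_nat_def)
  then show ?thesis unfolding loops_def walk_set_def by blast
qed

lemma Sgf_eq_Scount: "finite A \<Longrightarrow> Sgf A i = Abs_fps (\<lambda>n. real (Scount A i n))"
  unfolding Sgf_def Scount_def swalks_eq_walk_set inH_eq_half_line by (simp add: card_walk_set)

lemma Lgf_eq_Lcount: "finite A \<Longrightarrow> 0 < k \<Longrightarrow> Lgf A k = Abs_fps (\<lambda>n. real (Lcount A k n))"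
  unfolding Lgf_def Lcount_def by (simp add: loops_eq_walk_set inH_eq_half_line card_walk_set)

lemma Sgf_origin: "finite A \<Longrightarrow> Sgf A 0 = 1"
  by (rule fps_ext) (simp add: Sgf_eq_Scount Scount_origin)

definition Pgf :: "(int \<times> int) set \<Rightarrow> int \<Rightarrow> real fps" where
  "Pgf A k = Abs_fps (\<lambda>n. real (Pcount A k n))"

lemma Pgf_nth_0 [simp]: "Pgf A k $ 0 = (if k = 0 then 1 else 0)"
  by (auto simp: Pgf_def Pcount_def zero_prod_def)

context reversible_steps
begin

lemma Pgf_eq_Sgf_mult:
  assumes "0 \<le> k"
  shows "Pgf A k = Sgf A k * Pgf A 0"
proof (rule fps_ext)
  fix n
  show "Pgf A k $ n = (Sgf A k * Pgf A 0) $ n"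
    using Pcount_eq_convolution[OF assms, of n]
    by (simp add: Pgf_def Sgf_eq_Scount[OF finite_steps] fps_mult_nth)
qed

lemma Lgf_Suc: "0 < k \<Longrightarrow> Lgf A (k + 1) = Lgf A k + Sgf A k * Pgf A k"
  by (rule fps_ext)
    (simp add: Lgf_eq_Lcount[OF finite_steps] Sgf_eq_Scount[OF finite_steps] Pgf_def
      fps_mult_nth Lcount_Suc)

lemma Lgf_1: "Lgf A 1 = Pgf A 0"
  by (rule fps_ext) (simp add: Lgf_eq_Lcount[OF finite_steps] Pgf_def Lcount_1)

lemma Lgf_eq_Pgf_mult_sum: "1 \<le> k \<Longrightarrow> Lgf A (int k) = Pgf A 0 * (\<Sum>j<k. (Sgf A (int j))\<^sup>2)"
proof (induction k rule: dec_induct)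
  case base
  then show ?case by (simp add: Lgf_1 Sgf_origin[OF finite_steps])
next
  case (step k)
  have "Lgf A (int (Suc k)) = Lgf A (int k) + Sgf A (int k) * Pgf A (int k)"
    using Lgf_Suc[of "int k"] step by (simp add: add.commute)
  also have "\<dots> = Pgf A 0 * (\<Sum>j<Suc k. (Sgf A (int j))\<^sup>2)"
    using step Pgf_eq_Sgf_mult[of "int k"] by (simp add: algebra_simps power2_eq_square)
  finally show ?case .
qed

end

section \<open>The kernel method\<close>

definition laurent_poly :: "(int \<Rightarrow> real) \<Rightarrow> int \<Rightarrow> real fls" where
  "laurent_poly c N = (\<Sum>k\<in>{-N..N}. fls_const (c k) * fls_X_intpow k)"

lemma laurent_poly_nth: "laurent_poly c N $$ m = (if -N \<le> m \<and> m \<le> N then c m else 0)"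
proof -
  have "laurent_poly c N $$ m = (\<Sum>k\<in>{-N..N}. if m = k then c k else 0)"
    unfolding laurent_poly_def fls_nth_sum by (intro sum.cong refl) simp
  then show ?thesis by (simp add: sum.delta')
qed

lemma Apoly_mult_nth: "(Apoly A j * f) $$ k = (\<Sum>p\<in>{p\<in>A. snd p = j}. f $$ (k - fst p))"
  unfolding Apoly_def sum_distrib_right fls_nth_sum
  by (intro sum.cong refl) (simp add: fls_X_intpow_times_conv_shift)

text \<open>The coefficient of t^n is the Laurent polynomial in x counting walks of length n from the
  origin to height y.\<close>
definition Wgf :: "(int \<times> int) set \<Rightarrow> int \<Rightarrow> real fls fps" where
  "Wgf A y = Abs_fps (\<lambda>n. laurent_poly (\<lambda>k. real (Wcount A k y n)) (int n * max_step A))"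

lemma Wgf_nth: "finite A \<Longrightarrow> Wgf A y $ n $$ k = real (Wcount A k y n)"
  using Wcount_nonzero_bound[of A k y n]
  by (cases "Wcount A k y n = 0") (auto simp: Wgf_def laurent_poly_nth abs_le_iff)

lemma Wgf_nth_0: "Wgf A y $ 0 = (if y = 0 then 1 else 0)"
  by (simp add: Wgf_def laurent_poly_def Wcount_0)

lemma sum_split_snd:
  fixes A :: "('a \<times> int) set"
  assumes "finite A" and "\<And>i j. (i, j) \<in> A \<Longrightarrow> \<bar>j\<bar> \<le> 1"
  shows "(\<Sum>s\<in>A. g s) = (\<Sum>s\<in>{s\<in>A. snd s = 0}. g s) + (\<Sum>s\<in>{s\<in>A. snd s = 1}. g s)
          + (\<Sum>s\<in>{s\<in>A. snd s = -1}. g s)"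
proof -
  have "A = {s\<in>A. snd s = 0} \<union> {s\<in>A. snd s = 1} \<union> {s\<in>A. snd s = -1}"
    using assms(2) by (force simp: abs_le_iff)
  then have "(\<Sum>s\<in>A. g s) = (\<Sum>s\<in>{s\<in>A. snd s = 0} \<union> {s\<in>A. snd s = 1} \<union> {s\<in>A. snd s = -1}. g s)"
    by simp
  also have "\<dots> = (\<Sum>s\<in>{s\<in>A. snd s = 0}. g s) + (\<Sum>s\<in>{s\<in>A. snd s = 1}. g s)
          + (\<Sum>s\<in>{s\<in>A. snd s = -1}. g s)"
    using assms(1) by (subst sum.union_disjoint, auto)+
  finally show ?thesis .
qed

lemma sum_snd_flip:
  fixes A :: "('a \<times> int) set"
  assumes "\<And>i j. (i, j) \<in> A \<Longrightarrow> (i, - j) \<in> A"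
  shows "(\<Sum>s\<in>{s\<in>A. snd s = -1}. g (fst s)) = (\<Sum>s\<in>{s\<in>A. snd s = 1}. g (fst s))"
  by (rule sum.reindex_bij_witness[where i = "\<lambda>(i, j). (i, - j)" and j = "\<lambda>(i, j). (i, - j)"])
     (auto dest: assms)

definition row_recurrence :: "'a::comm_ring_1 \<Rightarrow> 'a \<Rightarrow> (int \<Rightarrow> 'a fps) \<Rightarrow> bool" where
  "row_recurrence a0 a1 f \<longleftrightarrow> (\<forall>y. f y = (if y = 0 then 1 else 0)
      + fps_X * (fps_const a0 * f y + fps_const a1 * (f (y - 1) + f (y + 1))))"

lemma row_recurrence_unique:
  assumes "row_recurrence a0 a1 f" and "row_recurrence a0 a1 g"
  shows "f = g"
proof -
  note f = assms(1)[unfolded row_recurrence_def, rule_format]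
  note g = assms(2)[unfolded row_recurrence_def, rule_format]
  have "\<forall>y. f y $ n = g y $ n" for n
  proof (induction n)
    case 0
    show ?case by (intro allI, subst f, subst g) simp
  next
    case (Suc n)
    show ?case by (intro allI, subst f, subst g) (simp add: Suc)
  qed
  then show ?thesis by (intro ext fps_ext) blast
qed

locale kernel_steps = finite_steps +
  assumes small_steps: "\<And>i j. (i, j) \<in> A \<Longrightarrow> \<bar>j\<bar> \<le> 1"
    and vertical_flip: "\<And>i j. (i, j) \<in> A \<Longrightarrow> (i, - j) \<in> A"
    and A1_nonzero: "Apoly A 1 \<noteq> 0"
begin

lemma Wgf_Suc:
  "Wgf A y $ Suc n = Apoly A 0 * Wgf A y $ n + Apoly A 1 * (Wgf A (y - 1) $ n + Wgf A (y + 1) $ n)"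
proof (rule fls_eqI)
  fix k
  let ?w = "\<lambda>s. real (Wcount A (k - fst s) (y - snd s) n)"
  have "Wgf A y $ Suc n $$ k = (\<Sum>s\<in>A. ?w s)"
    by (simp add: Wgf_nth[OF finite_steps] Wcount_Suc)
  also have "\<dots> = (\<Sum>s\<in>{s\<in>A. snd s = 0}. ?w s) + (\<Sum>s\<in>{s\<in>A. snd s = 1}. ?w s)
      + (\<Sum>s\<in>{s\<in>A. snd s = -1}. ?w s)"
    by (rule sum_split_snd[OF finite_steps small_steps])
  also have "(\<Sum>s\<in>{s\<in>A. snd s = -1}. ?w s) = (\<Sum>s\<in>{s\<in>A. snd s = -1}. real (Wcount A (k - fst s) (y + 1) n))"
    by (intro sum.cong refl) simp
  also have "\<dots> = (\<Sum>s\<in>{s\<in>A. snd s = 1}. real (Wcount A (k - fst s) (y + 1) n))"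
    by (rule sum_snd_flip[OF vertical_flip])
  finally show "Wgf A y $ Suc n $$ k
      = (Apoly A 0 * Wgf A y $ n + Apoly A 1 * (Wgf A (y - 1) $ n + Wgf A (y + 1) $ n)) $$ k"
    by (simp add: Apoly_mult_nth Wgf_nth[OF finite_steps] distrib_left sum.distrib)
qed

lemma Wgf_row_recurrence: "row_recurrence (Apoly A 0) (Apoly A 1) (Wgf A)"
  unfolding row_recurrence_def
proof (intro allI fps_ext)
  fix y n
  show "Wgf A y $ n = ((if y = 0 then 1 else 0)
      + fps_X * (fps_const (Apoly A 0) * Wgf A y + fps_const (Apoly A 1) * (Wgf A (y - 1) + Wgf A (y + 1)))) $ n"
    by (cases n) (simp_all add: Wgf_nth_0 Wgf_Suc fps_X_mult_nth)
qed

end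

lemma fps_X_times_fps_shift_1:
  fixes f :: "'a::comm_ring_1 fps"
  shows "f $ 0 = 0 \<Longrightarrow> fps_X * fps_shift 1 f = f"
  by (intro fps_ext, rename_tac n, case_tac n) (simp_all add: fps_X_mult_nth)

lemma delta_nth_0: "delta A $ 0 = 1"
  by (simp add: delta_def power2_eq_square)

context kernel_steps
begin

definition kernel_a :: "real fls fps" where
  "kernel_a = 1 - fps_X * fps_const (Apoly A 0)"

definition kernel_c :: "real fls fps" where
  "kernel_c = fps_X * fps_const (Apoly A 1)"

definition inv_sqrt_delta :: "real fls fps" where
  "inv_sqrt_delta = fps_radical (\<lambda>_ _. 1) 2 (inverse (delta A))"

definition sqrt_delta :: "real fls fps" where
  "sqrt_delta = inverse inv_sqrt_delta"

text \<open>Z = (a - sqrt delta) / (2 c), a root of the kernel equation c Z^2 - a Z + c = 0;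
  as c = A_1 t, the division by c is a shift.\<close>
definition kernel_root :: "real fls fps" where
  "kernel_root = fps_const (inverse (2 * Apoly A 1)) * fps_shift 1 (kernel_a - sqrt_delta)"

definition row_solution :: "int \<Rightarrow> real fls fps" where
  "row_solution y = inv_sqrt_delta * kernel_root ^ nat \<bar>y\<bar>"

lemma delta_eq_kernel: "delta A = kernel_a\<^sup>2 - 4 * kernel_c\<^sup>2"
  by (simp add: delta_def kernel_a_def kernel_c_def power_mult_distrib fps_const_power)

lemma inv_sqrt_delta_square: "inv_sqrt_delta\<^sup>2 = inverse (delta A)"
  using power_radical[of "inverse (delta A)" "\<lambda>_ _. 1" 1] delta_nth_0
  by (simp add: inv_sqrt_delta_def numeral_2_eq_2)

lemma inv_sqrt_delta_nth_0: "inv_sqrt_delta $ 0 = 1"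
  by (simp add: inv_sqrt_delta_def)

lemma inv_sqrt_delta_mult_sqrt_delta: "inv_sqrt_delta * sqrt_delta = 1"
  unfolding sqrt_delta_def by (rule inverse_mult_eq_1') (simp add: inv_sqrt_delta_nth_0)

lemma sqrt_delta_square: "sqrt_delta\<^sup>2 = delta A"
proof -
  have "sqrt_delta\<^sup>2 = inverse (inv_sqrt_delta\<^sup>2)"
    by (simp add: sqrt_delta_def fps_inverse_power)
  then show ?thesis by (simp add: inv_sqrt_delta_square delta_nth_0)
qed

lemma two_kernel_c_mult_root: "2 * kernel_c * kernel_root = kernel_a - sqrt_delta"
proof -
  have "fps_X * fps_shift 1 (kernel_a - sqrt_delta) = kernel_a - sqrt_delta"
    by (rule fps_X_times_fps_shift_1) (simp add: kernel_a_def sqrt_delta_def inv_sqrt_delta_nth_0)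
  moreover have "2 * kernel_c * kernel_root
      = fps_X * fps_shift 1 (kernel_a - sqrt_delta) * fps_const (2 * Apoly A 1 * inverse (2 * Apoly A 1))"
    by (simp add: kernel_c_def kernel_root_def mult_ac flip: fps_const_mult)
  ultimately show ?thesis
    using A1_nonzero by simp
qed

lemma kernel_root_quadratic: "kernel_c * kernel_root\<^sup>2 - kernel_a * kernel_root + kernel_c = 0"
proof -
  have "(4 * kernel_c) * (kernel_c * kernel_root\<^sup>2 - kernel_a * kernel_root + kernel_c)
      = (2 * kernel_c * kernel_root)\<^sup>2 - 2 * kernel_a * (2 * kernel_c * kernel_root) + 4 * kernel_c\<^sup>2"
    by (simp add: algebra_simps power2_eq_square)
  also have "\<dots> = sqrt_delta\<^sup>2 - delta A"
    unfolding two_kernel_c_mult_root delta_eq_kernel by (simp add: algebra_simps power2_eq_square)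
  finally have "(4 * kernel_c) * (kernel_c * kernel_root\<^sup>2 - kernel_a * kernel_root + kernel_c) = 0"
    by (simp add: sqrt_delta_square)
  moreover have "kernel_c $ 1 \<noteq> 0"
    using A1_nonzero by (simp add: kernel_c_def)
  ultimately show ?thesis by (metis mult_eq_0_iff zero_neq_numeral fps_zero_nth)
qed

lemma kernel_a_mult_row_solution:
  "kernel_a * row_solution y = (if y = 0 then 1 else 0) + kernel_c * (row_solution (y - 1) + row_solution (y + 1))"
proof (cases "y = 0")
  case True
  have "kernel_a * inv_sqrt_delta - kernel_c * (2 * inv_sqrt_delta * kernel_root)
      = inv_sqrt_delta * (kernel_a - 2 * kernel_c * kernel_root)"
    by (simp add: algebra_simps)
  also have "\<dots> = 1"
    by (simp add: two_kernel_c_mult_root inv_sqrt_delta_mult_sqrt_delta)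
  finally show ?thesis
    using True by (simp add: row_solution_def algebra_simps)
next
  case False
  define j where "j = nat \<bar>y\<bar> - 1"
  have y: "nat \<bar>y\<bar> = Suc j" using False by (simp add: j_def)
  have "{nat \<bar>y - 1\<bar>, nat \<bar>y + 1\<bar>} = {j, Suc (Suc j)}"
    using False y by auto
  then have neighbours: "row_solution (y - 1) + row_solution (y + 1)
      = inv_sqrt_delta * kernel_root ^ j + inv_sqrt_delta * kernel_root ^ Suc (Suc j)"
    unfolding row_solution_def using False y
    by (cases "y > 0") (auto simp: doubleton_eq_iff add.commute)
  have "kernel_a * row_solution y = inv_sqrt_delta * kernel_root ^ j * (kernel_a * kernel_root)"
    by (simp add: row_solution_def y algebra_simps)
  also have "kernel_a * kernel_root = kernel_c * kernel_root\<^sup>2 + kernel_c"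
    using kernel_root_quadratic by (simp add: algebra_simps)
  finally have "kernel_a * row_solution y
      = kernel_c * (inv_sqrt_delta * kernel_root ^ j + inv_sqrt_delta * kernel_root ^ Suc (Suc j))"
    by (simp add: algebra_simps power2_eq_square)
  with False show ?thesis by (simp only: neighbours) simp
qed

lemma row_solution_recurrence: "row_recurrence (Apoly A 0) (Apoly A 1) row_solution"
  unfolding row_recurrence_def
proof
  fix y
  have "row_solution y = kernel_a * row_solution y + fps_X * fps_const (Apoly A 0) * row_solution y"
    by (simp add: kernel_a_def algebra_simps)
  then show "row_solution y = (if y = 0 then 1 else 0) + fps_X * (fps_const (Apoly A 0) * row_solution y
      + fps_const (Apoly A 1) * (row_solution (y - 1) + row_solution (y + 1)))"
    by (simp add: kernel_a_mult_row_solution kernel_c_def algebra_simps)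
qed

lemma delta_mult_Wgf_axis_square: "delta A * (Wgf A 0)\<^sup>2 = 1"
proof -
  have "Wgf A 0 = row_solution 0"
    using row_recurrence_unique[OF Wgf_row_recurrence row_solution_recurrence] by simp
  then show ?thesis
    by (simp add: row_solution_def inv_sqrt_delta_square inverse_mult_eq_1' delta_nth_0)
qed

end

section \<open>Canonical factorizations\<close>

definition fps_map :: "('a \<Rightarrow> 'b) \<Rightarrow> 'a fps \<Rightarrow> 'b fps" where
  "fps_map h f = Abs_fps (\<lambda>n. h (f $ n))"

lemma fps_map_nth [simp]: "fps_map h f $ n = h (f $ n)"
  by (simp add: fps_map_def)

lemma fps_map_fps_map: "fps_map g (fps_map h f) = fps_map (\<lambda>x. g (h x)) f"
  by (rule fps_ext) simp

lemma fps_right_inverse_eq_inverse: "f $ 0 = (1::'a::division_ring) \<Longrightarrow> fps_right_inverse f 1 = inverse f"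
  by (simp add: fps_inverse_def)

locale ring_hom =
  fixes h :: "'a::comm_ring_1 \<Rightarrow> 'b::comm_ring_1"
  assumes hom_add: "\<And>a b. h (a + b) = h a + h b"
    and hom_mult: "\<And>a b. h (a * b) = h a * h b"
    and hom_one: "h 1 = 1"
begin

lemma hom_zero: "h 0 = 0"
  using hom_add[of 0 0] by simp

lemma hom_diff: "h (a - b) = h a - h b"
  by (metis add_diff_cancel hom_add diff_add_cancel)

lemma hom_sum: "h (\<Sum>x\<in>S. f x) = (\<Sum>x\<in>S. h (f x))"
  by (induction S rule: infinite_finite_induct) (simp_all add: hom_zero hom_add)

lemma fps_map_mult: "fps_map h (f * g) = fps_map h f * fps_map h g"
  by (rule fps_ext) (simp add: fps_mult_nth hom_sum hom_mult)

lemma fps_map_one: "fps_map h 1 = 1"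
  by (rule fps_ext) (simp add: hom_one hom_zero fps_one_nth)

lemma fps_map_power: "fps_map h (f ^ n) = fps_map h f ^ n"
  by (induction n) (simp_all add: fps_map_one fps_map_mult)

lemma fps_map_right_inverse:
  assumes "f $ 0 = 1"
  shows "fps_map h (fps_right_inverse f 1) = fps_right_inverse (fps_map h f) 1"
proof -
  have "fps_map h f * fps_map h (fps_right_inverse f 1) = 1"
    using fps_right_inverse[of f 1] assms by (simp flip: fps_map_mult add: fps_map_one)
  from fps_lr_inverse_unique_ring1(2)[OF this] show ?thesis
    using assms by (simp add: hom_one)
qed

end

lemma fps_map_right_inverse_eq_inverse:
  fixes h :: "'a::comm_ring_1 \<Rightarrow> 'b::field"
  assumes "ring_hom h" and "f $ 0 = 1"
  shows "fps_map h (fps_right_inverse f 1) = inverse (fps_map h f)"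
  using ring_hom.fps_map_right_inverse[OF assms] ring_hom.hom_one[OF assms(1)] assms(2)
  by (simp add: fps_right_inverse_eq_inverse)

lemma ring_hom_fls_const: "ring_hom (fls_const :: real \<Rightarrow> real fls)"
  by unfold_locales (simp_all add: fls_plus_const)

lemma ring_hom_poly_0: "ring_hom (\<lambda>p::real poly. poly p 0)"
  by unfold_locales simp_all

lemma map_poly_fls_const_mult:
  "map_poly fls_const (p * q) = map_poly fls_const p * map_poly (fls_const :: real \<Rightarrow> real fls) q"
  using ring_hom.hom_sum[OF ring_hom_fls_const]
  by (intro poly_eqI) (simp add: coeff_map_poly coeff_mult)

lemma map_poly_fls_const_add:
  "map_poly fls_const (p + q) = map_poly fls_const p + map_poly (fls_const :: real \<Rightarrow> real fls) q"
  by (rule poly_eqI) (simp add: coeff_map_poly fls_plus_const)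

lemma ring_hom_poly_map_fls_const: "ring_hom (\<lambda>p::real poly. poly (map_poly fls_const p) g)"
  by unfold_locales (simp_all add: map_poly_fls_const_mult map_poly_fls_const_add)

lemma degree_map_poly_fls_const: "degree (map_poly (fls_const :: real \<Rightarrow> real fls) p) = degree p"
  by (rule degree_map_poly) (simp add: fls_const_nonzero)

lemma poly_x_conv_poly: "poly_x p = poly (map_poly fls_const p) fls_X"
  unfolding poly_x_def poly_altdef degree_map_poly_fls_const
  by (intro sum.cong refl) (simp add: coeff_map_poly fls_X_power_conv_shift_1)

lemma poly_xinv_conv_poly: "poly_xinv p = poly (map_poly fls_const p) fls_X_inv"
  unfolding poly_xinv_def poly_altdef degree_map_poly_fls_const
  by (intro sum.cong refl) (simp add: coeff_map_poly fls_X_inv_power_conv_shift_1)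

lemma ring_hom_poly_x: "ring_hom poly_x"
  using ring_hom_poly_map_fls_const[of fls_X] by (simp add: poly_x_conv_poly[abs_def])

lemma ring_hom_poly_xinv: "ring_hom poly_xinv"
  using ring_hom_poly_map_fls_const[of fls_X_inv] by (simp add: poly_xinv_conv_poly[abs_def])

lemma map_poly_fls_const_pCons: "map_poly (fls_const :: real \<Rightarrow> real fls) [:c:] = [:fls_const c:]"
  by (rule poly_eqI) (simp add: coeff_map_poly coeff_pCons split: nat.split)

lemma poly_x_const [simp]: "poly_x [:c:] = fls_const c"
  by (simp add: poly_x_conv_poly map_poly_fls_const_pCons)

lemma poly_x_nth: "poly_x q $$ m = (if 0 \<le> m then coeff q (nat m) else 0)"
proof -
  have "poly_x q $$ m = (\<Sum>i\<le>degree q. if i = nat m \<and> 0 \<le> m then coeff q i else 0)"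
    unfolding poly_x_def fls_nth_sum by (intro sum.cong refl) auto
  then show ?thesis by (simp add: coeff_eq_0 not_le)
qed

lemma poly_xinv_nth: "poly_xinv q $$ m = (if m \<le> 0 then coeff q (nat (- m)) else 0)"
proof -
  have "poly_xinv q $$ m = (\<Sum>i\<le>degree q. if i = nat (- m) \<and> m \<le> 0 then coeff q i else 0)"
    unfolding poly_xinv_def fls_nth_sum by (intro sum.cong refl) auto
  then show ?thesis by (simp add: coeff_eq_0 not_le)
qed

lemma poly_xinv_mult_nth:
  "(poly_xinv p * g) $$ k = (\<Sum>i\<le>degree p. coeff p i * g $$ (k + int i))"
  unfolding poly_xinv_def sum_distrib_right fls_nth_sum
  by (intro sum.cong refl)
     (simp only: mult.assoc, simp only: fls_X_intpow_times_conv_shift(1) fls_mult_const_nth fls_shift_nth, simp)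

lemma fps_mult_nth_diff:
  fixes x y x' y' :: "'a::comm_ring_1 fps"
  assumes n: "1 \<le> n" and x0: "x $ 0 = 1" "x' $ 0 = 1" and y0: "y $ 0 = 1" "y' $ 0 = 1"
    and agree: "\<And>i. i < n \<Longrightarrow> x $ i = x' $ i \<and> y $ i = y' $ i"
  shows "(x * y) $ n - (x' * y') $ n = (x $ n - x' $ n) + (y $ n - y' $ n)"
proof -
  have "x $ i * y $ (n - i) - x' $ i * y' $ (n - i)
      = (if i = n then x $ n - x' $ n else 0) + (if i = 0 then y $ n - y' $ n else 0)"
    if "i \<le> n" for i
    using that n x0 y0 agree[of i] agree[of "n - i"] by (cases "i = 0"; cases "i = n") auto
  then have "(x * y) $ n - (x' * y') $ n
      = (\<Sum>i=0..n. (if i = n then x $ n - x' $ n else 0) + (if i = 0 then y $ n - y' $ n else 0))"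
    by (simp add: fps_mult_nth flip: sum_subtractf)
  then show ?thesis by (simp add: sum.distrib)
qed

lemma fps_mult3_nth_diff:
  fixes x y z x' y' z' :: "'a::comm_ring_1 fps"
  assumes n: "1 \<le> n" and "x $ 0 = 1" "x' $ 0 = 1" "y $ 0 = 1" "y' $ 0 = 1" "z $ 0 = 1" "z' $ 0 = 1"
    and agree: "\<And>i. i < n \<Longrightarrow> x $ i = x' $ i \<and> y $ i = y' $ i \<and> z $ i = z' $ i"
  shows "(x * y * z) $ n - (x' * y' * z') $ n = (x $ n - x' $ n) + (y $ n - y' $ n) + (z $ n - z' $ n)"
proof -
  have "(x * y) $ i = (x' * y') $ i" if "i < n" for i
    using agree that by (simp add: fps_mult_nth)
  then have "(x * y * z) $ n - (x' * y' * z') $ n = ((x * y) $ n - (x' * y') $ n) + (z $ n - z' $ n)"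
    using assms by (intro fps_mult_nth_diff) simp_all
  also have "(x * y) $ n - (x' * y') $ n = (x $ n - x' $ n) + (y $ n - y' $ n)"
    using assms by (intro fps_mult_nth_diff) auto
  finally show ?thesis .
qed

lemma laurent_decomposition_unique:
  assumes "fls_const d + poly_x p + poly_xinv q = 0" and "coeff p 0 = 0" and "coeff q 0 = 0"
  shows "d = 0 \<and> p = 0 \<and> q = 0"
proof -
  have coeffs: "(if j = 0 then d else 0) + (if 0 \<le> j then coeff p (nat j) else 0)
      + (if j \<le> 0 then coeff q (nat (- j)) else 0) = 0" for j
    using arg_cong[OF assms(1), of "\<lambda>f. f $$ j"] by (simp add: poly_x_nth poly_xinv_nth)
  have "d = 0" using coeffs[of 0] assms(2,3) by simp
  moreover have "p = 0"
  proof (rule poly_eqI)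
    fix t show "coeff p t = coeff 0 t"
      using assms(2) coeffs[of "int t"] by (cases "t = 0") simp_all
  qed
  moreover have "q = 0"
  proof (rule poly_eqI)
    fix t show "coeff q t = coeff 0 t"
      using assms(3) coeffs[of "- int t"] by (cases "t = 0") simp_all
  qed
  ultimately show ?thesis by blast
qed

lemma canonical_factorization_iff:
  "canonical_factorization A D Dl Dlb \<longleftrightarrow>
     D $ 0 = 1 \<and>
     (\<forall>n. poly (Dl $ n) 0 = (if n = 0 then 1 else 0)) \<and>
     (\<forall>n. poly (Dlb $ n) 0 = (if n = 0 then 1 else 0)) \<and>
     Dl $ 0 = 1 \<and> Dlb $ 0 = 1 \<and>
     delta A = fps_map fls_const D * fps_map poly_x Dl * fps_map poly_xinv Dlb"
  unfolding canonical_factorization_def fps_map_def by simp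

text \<open>At the first power of t where two factorizations differ, the difference of the
  coefficients would write 0 as a constant plus a polynomial in x plus a polynomial in 1/x, the
  latter two without constant term.\<close>
lemma canonical_factorization_unique:
  assumes "canonical_factorization A D1 L1 M1" and "canonical_factorization A D2 L2 M2"
  shows "D1 = D2"
proof -
  interpret fls_const: ring_hom "fls_const :: real \<Rightarrow> real fls" by (rule ring_hom_fls_const)
  interpret poly_x: ring_hom poly_x by (rule ring_hom_poly_x)
  interpret poly_xinv: ring_hom poly_xinv by (rule ring_hom_poly_xinv)
  note cf1 = assms(1)[unfolded canonical_factorization_iff]
    and cf2 = assms(2)[unfolded canonical_factorization_iff]
  have "\<forall>i<n. D1 $ i = D2 $ i \<and> L1 $ i = L2 $ i \<and> M1 $ i = M2 $ i" for n
  proof (induction n)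
    case (Suc m)
    show ?case
    proof (cases "m = 0")
      case True
      then show ?thesis using cf1 cf2 by simp
    next
      case False
      have "fls_const (D1 $ m - D2 $ m) + poly_x (L1 $ m - L2 $ m) + poly_xinv (M1 $ m - M2 $ m)
          = (fps_map fls_const D1 * fps_map poly_x L1 * fps_map poly_xinv M1) $ m
            - (fps_map fls_const D2 * fps_map poly_x L2 * fps_map poly_xinv M2) $ m"
        using False cf1 cf2 Suc.IH
        by (subst fps_mult3_nth_diff)
          (simp_all add: fls_const.hom_diff poly_x.hom_diff poly_xinv.hom_diff poly_x.hom_one poly_xinv.hom_one)
      also have "\<dots> = 0" using cf1 cf2 by simp
      finally have "D1 $ m - D2 $ m = 0 \<and> L1 $ m - L2 $ m = 0 \<and> M1 $ m - M2 $ m = 0"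
        using False cf1 cf2 by (intro laurent_decomposition_unique) (simp_all flip: poly_0_coeff_0)
      then show ?thesis using Suc.IH by (auto simp: less_Suc_eq)
    qed
  qed simp
  then show ?thesis by (intro fps_ext) blast
qed

lemma Dconst_eqI: "canonical_factorization A D Dl Dlb \<Longrightarrow> Dconst A = D"
  unfolding Dconst_def by (blast intro: canonical_factorization_unique)

lemma fps_sqrt1_square:
  assumes "s $ 0 = 1"
  shows "fps_sqrt1 (s\<^sup>2) = s"
  unfolding fps_sqrt1_def
proof (rule the_equality)
  fix s' assume s': "s' $ 0 = 1 \<and> s'\<^sup>2 = s\<^sup>2"
  then have "(s' - s) * (s' + s) = 0" by (simp add: algebra_simps power2_eq_square)
  moreover have "(s' + s) $ 0 = 2" using s' assms by simp
  then have "s' + s \<noteq> 0" by (metis fps_zero_nth zero_neq_numeral)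
  ultimately show "s' = s" by simp
qed (use assms in simp)

section \<open>The canonical factorization of delta\<close>

definition count_poly :: "(int \<Rightarrow> nat) \<Rightarrow> nat \<Rightarrow> real poly" where
  "count_poly c N = (\<Sum>i\<le>N. monom (real (c (int i))) i)"

lemma coeff_count_poly:
  assumes "\<And>i. N < i \<Longrightarrow> c (int i) = 0"
  shows "coeff (count_poly c N) i = real (c (int i))"
  using assms by (auto simp: count_poly_def coeff_sum sum.delta)

lemma degree_count_poly: "degree (count_poly c N) \<le> N"
  unfolding count_poly_def by (intro degree_sum_le) (auto intro: order.trans[OF degree_monom_le])

lemma (in finite_steps) int_mult_nat_max_step: "int (n * nat (max_step A)) = int n * max_step A"
  using max_step_nonneg[OF finite_steps] by simp

locale walk_model = reversible_steps + kernel_steps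
begin

text \<open>S(x) as a power series in t with polynomial coefficients; n * max_step A bounds the degree
  of the coefficient of t^n.\<close>
definition Spoly :: "real poly fps" where
  "Spoly = Abs_fps (\<lambda>n. count_poly (\<lambda>i. Scount A i n) (n * nat (max_step A)))"

definition Ppoly :: "real poly fps" where
  "Ppoly = Abs_fps (\<lambda>n. count_poly (\<lambda>i. Pcount A i n) (n * nat (max_step A)))"

lemma coeff_Spoly: "coeff (Spoly $ n) i = real (Scount A (int i) n)"
  unfolding Spoly_def fps_nth_Abs_fps
proof (rule coeff_count_poly, rule ccontr)
  fix i assume "n * nat (max_step A) < i" "Scount A (int i) n \<noteq> 0"
  then show False
    using Scount_nonzero_bound[OF finite_steps, of "int i" n] int_mult_nat_max_step[of n] by linarith
qed

lemma coeff_Ppoly: "coeff (Ppoly $ n) i = real (Pcount A (int i) n)"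
  unfolding Ppoly_def fps_nth_Abs_fps
proof (rule coeff_count_poly, rule ccontr)
  fix i assume "n * nat (max_step A) < i" "Pcount A (int i) n \<noteq> 0"
  then show False
    using Pcount_nonzero_bound[OF finite_steps, of "int i" n] int_mult_nat_max_step[of n] by linarith
qed

lemma degree_Spoly: "degree (Spoly $ n) \<le> n * nat (max_step A)"
  by (simp add: Spoly_def degree_count_poly)

lemma Ppoly_eq: "Ppoly = fps_map (\<lambda>c. [:c:]) (Pgf A 0) * Spoly"
proof (intro fps_ext poly_eqI)
  fix n i
  have "coeff (Ppoly $ n) i = Pgf A (int i) $ n"
    by (simp add: coeff_Ppoly Pgf_def)
  also have "\<dots> = (Pgf A 0 * Sgf A (int i)) $ n"
    by (subst Pgf_eq_Sgf_mult) (simp_all add: mult.commute)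
  also have "\<dots> = (\<Sum>m=0..n. Pgf A 0 $ m * real (Scount A (int i) (n - m)))"
    by (simp add: fps_mult_nth Sgf_eq_Scount[OF finite_steps] atLeast0AtMost)
  also have "\<dots> = coeff ((fps_map (\<lambda>c. [:c:]) (Pgf A 0) * Spoly) $ n) i"
    by (simp add: fps_mult_nth coeff_sum coeff_Spoly)
  finally show "coeff (Ppoly $ n) i = coeff ((fps_map (\<lambda>c. [:c:]) (Pgf A 0) * Spoly) $ n) i" .
qed

lemma poly_x_Ppoly_nth: "poly_x (Ppoly $ n) $$ k = real (Pcount A k n)"
  by (simp add: poly_x_nth coeff_Ppoly Pcount_neg)

lemma Wgf_axis_eq_product: "Wgf A 0 = fps_map poly_xinv Spoly * fps_map poly_x Ppoly"
proof (intro fps_ext fls_eqI)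
  fix n k
  let ?N = "n * nat (max_step A)"
  have "Wgf A 0 $ n $$ k = (\<Sum>i=0..?N. \<Sum>m=0..n. real (Scount A (int i) m) * real (Pcount A (k + int i) (n - m)))"
    unfolding Wgf_nth[OF finite_steps]
    by (subst Wcount_eq_sum[where M = ?N]) (simp_all add: int_mult_nat_max_step[symmetric])
  also have "\<dots> = (\<Sum>m=0..n. \<Sum>i\<le>?N. real (Scount A (int i) m) * real (Pcount A (k + int i) (n - m)))"
    by (subst sum.swap) (simp add: atLeast0AtMost)
  also have "\<dots> = (\<Sum>m=0..n. (poly_xinv (Spoly $ m) * poly_x (Ppoly $ (n - m))) $$ k)"
  proof (intro sum.cong refl)
    fix m assume "m \<in> {0..n}"
    then have deg: "degree (Spoly $ m) \<le> ?N"
      using degree_Spoly[of m] by (meson atLeastAtMost_iff le_trans mult_le_mono1)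
    have "(poly_xinv (Spoly $ m) * poly_x (Ppoly $ (n - m))) $$ k
        = (\<Sum>i\<le>degree (Spoly $ m). coeff (Spoly $ m) i * real (Pcount A (k + int i) (n - m)))"
      by (simp add: poly_xinv_mult_nth poly_x_Ppoly_nth)
    also have "\<dots> = (\<Sum>i\<le>?N. coeff (Spoly $ m) i * real (Pcount A (k + int i) (n - m)))"
      using deg by (intro sum.mono_neutral_left) (auto simp: coeff_eq_0)
    finally show "(\<Sum>i\<le>?N. real (Scount A (int i) m) * real (Pcount A (k + int i) (n - m)))
        = (poly_xinv (Spoly $ m) * poly_x (Ppoly $ (n - m))) $$ k"
      by (simp add: coeff_Spoly)
  qed
  also have "\<dots> = (fps_map poly_xinv Spoly * fps_map poly_x Ppoly) $ n $$ k"
    by (simp add: fps_mult_nth fls_nth_sum)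
  finally show "Wgf A 0 $ n $$ k = (fps_map poly_xinv Spoly * fps_map poly_x Ppoly) $ n $$ k" .
qed

lemma Wgf_axis_factorization:
  "Wgf A 0 = fps_map fls_const (Pgf A 0) * fps_map poly_x Spoly * fps_map poly_xinv Spoly"
proof -
  interpret poly_x: ring_hom poly_x by (rule ring_hom_poly_x)
  have "fps_map poly_x Ppoly = fps_map fls_const (Pgf A 0) * fps_map poly_x Spoly"
    by (simp add: Ppoly_eq poly_x.fps_map_mult fps_map_fps_map)
  then show ?thesis by (simp add: Wgf_axis_eq_product mult_ac)
qed

lemma Spoly_nth_0: "Spoly $ 0 = 1"
  by (rule poly_eqI) (simp add: coeff_Spoly Scount_def zero_prod_def coeff_1)

lemma fps_map_poly_0_Spoly: "fps_map (\<lambda>p. poly p 0) Spoly = 1"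
  by (rule fps_ext) (simp add: poly_0_coeff_0 coeff_Spoly Scount_origin)

lemma canonical_factorization_delta:
  defines "Delta \<equiv> fps_right_inverse (Spoly\<^sup>2) 1"
  shows "canonical_factorization A (inverse ((Pgf A 0)\<^sup>2)) Delta Delta"
proof -
  interpret fls_const: ring_hom "fls_const :: real \<Rightarrow> real fls" by (rule ring_hom_fls_const)
  interpret poly_x: ring_hom poly_x by (rule ring_hom_poly_x)
  interpret poly_xinv: ring_hom poly_xinv by (rule ring_hom_poly_xinv)
  interpret poly_0: ring_hom "\<lambda>p::real poly. poly p 0" by (rule ring_hom_poly_0)
  have S0: "(Spoly\<^sup>2) $ 0 = 1" and E0: "((Pgf A 0)\<^sup>2) $ 0 = 1"
    by (simp_all add: power2_eq_square Spoly_nth_0)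
  have D: "fps_map fls_const (inverse ((Pgf A 0)\<^sup>2)) = inverse ((fps_map fls_const (Pgf A 0))\<^sup>2)"
    using fps_map_right_inverse_eq_inverse[OF ring_hom_fls_const E0]
    by (simp add: fps_right_inverse_eq_inverse[OF E0] fls_const.fps_map_power)
  have L: "fps_map poly_x Delta = inverse ((fps_map poly_x Spoly)\<^sup>2)"
    using fps_map_right_inverse_eq_inverse[OF ring_hom_poly_x S0]
    by (simp add: Delta_def poly_x.fps_map_power)
  have M: "fps_map poly_xinv Delta = inverse ((fps_map poly_xinv Spoly)\<^sup>2)"
    using fps_map_right_inverse_eq_inverse[OF ring_hom_poly_xinv S0]
    by (simp add: Delta_def poly_xinv.fps_map_power)
  have "fps_map (\<lambda>p. poly p 0) Delta = 1"
    using poly_0.fps_map_right_inverse[OF S0]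
    by (simp add: Delta_def poly_0.fps_map_power fps_map_poly_0_Spoly fps_lr_inverse_one_one)
  then have "poly (Delta $ n) 0 = (if n = 0 then 1 else 0)" for n
    using fps_map_nth[of "\<lambda>p. poly p 0" Delta n] by simp
  moreover have "delta A = inverse ((Wgf A 0)\<^sup>2)"
    using delta_mult_Wgf_axis_square by (simp add: fps_inverse_unique mult.commute)
  moreover have "Delta $ 0 = 1" by (simp add: Delta_def)
  ultimately show ?thesis
    unfolding canonical_factorization_iff using E0
    by (simp add: Wgf_axis_factorization D L M power_mult_distrib fps_inverse_mult)
qed

lemma inverse_sqrt_Dconst: "inverse (fps_sqrt1 (Dconst A)) = Pgf A 0"
proof -
  have "Dconst A = (inverse (Pgf A 0))\<^sup>2"
    using Dconst_eqI[OF canonical_factorization_delta] by (simp add: fps_inverse_power)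
  then show ?thesis by (simp add: fps_sqrt1_square)
qed

end

lemma fps_X_mult_geometric_nth:
  fixes E :: "real fps" and T :: "nat \<Rightarrow> real fps"
  shows "(fps_X * inverse (1 - fps_X) * fps_const E * Abs_fps T) $ k
      = (if k = 0 then 0 else E * (\<Sum>j<k. T j))"
proof (cases k)
  case (Suc m)
  have "inverse (1 - fps_X :: real fps fps) = Abs_fps (\<lambda>_. 1)"
    by (simp add: fps_inverse_def fps_lr_inverse_one_minus_fps_X(2) fps_lr_inverse_one_one)
  have "(fps_X * inverse (1 - fps_X) * fps_const E * Abs_fps T) $ k
      = (fps_const E * (inverse (1 - fps_X) * Abs_fps T)) $ m"
    by (simp add: Suc mult_ac)
  also have "\<dots> = E * (\<Sum>i=0..m. T (m - i))"
    by (simp only: fps_mult_left_const_nth \<open>inverse (1 - fps_X) = Abs_fps (\<lambda>_. 1)\<close>)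
      (simp add: fps_mult_nth)
  also have "(\<Sum>i=0..m. T (m - i)) = (\<Sum>j<k. T j)"
    by (subst sum.atLeastAtMost_rev) (simp add: Suc lessThan_Suc_atMost atLeast0AtMost)
  finally show ?thesis by (simp add: Suc)
qed simp

theorem mainTheorem15:
  fixes A :: "(int \<times> int) set"
  assumes fin: "finite A"
    and sym: "\<And>i j. (i, j) \<in> A \<Longrightarrow> (i, - j) \<in> A"
    and small: "\<And>i j. (i, j) \<in> A \<Longrightarrow> \<bar>j\<bar> \<le> 1"
    and A1_nonzero: "Apoly A 1 \<noteq> 0"
    and rev: "\<And>i j. (i, j) \<in> A \<Longrightarrow> (- i, - j) \<in> A"
  shows "(Abs_fps (\<lambda>k. if k > 0 then Lgf A (int k) else 0) :: real fps fps)
         = fps_X * inverse (1 - fps_X)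
           * fps_const (inverse (fps_sqrt1 (Dconst A)))
           * Abs_fps (\<lambda>k. (Sgf A (int k))\<^sup>2)"
proof -
  interpret walk_model A
    using fin sym small A1_nonzero rev by unfold_locales (auto simp: uminus_prod_def)
  show ?thesis
    by (rule fps_ext)
      (simp add: fps_X_mult_geometric_nth inverse_sqrt_Dconst Lgf_eq_Pgf_mult_sum)
qed

end
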